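(* Let $p,q$ be primes with $p\equiv 1\pmod 4$, $q\equiv 3\pmod 4$ and $q-p=2$, having a common primitive root $g$ (so $\gcd(p-1,q-1)=2$). Let $s$ be the balanced Whiteman generalized cyclotomic sequence of period $N=pq$ defined in the context. Then the 2-adic complexity of $s$ is maximal: $\varphi_2(s)=N$.
   Context: Let $N=pq$ and $e=(p-1)(q-1)/2$. Let $x$ be the unique element of $\mathbb{Z}_N$ with $x\equiv g\pmod p$ and $x\equiv 1\pmod q$. The Whiteman generalized cyclotomic classes of order 2 are $D_i=\{g^{s}x^{i}\bmod N: s=0,1,\dots,e-1\}$ for $i=0,1$; they partition $\mathbb{Z}_N^{*}$. For a prime $r\in\{p,q\}$, let $D_0^{(r)}=\{g^{2t}\bmod r: 0\le t\le \frac{r-1}{2}-1\}$ and $D_1^{(r)}=\{g^{2t+1}\bmod r: 0\le t\le \frac{r-1}{2}-1\}$. For $j=0,1$ let $D_j^{(p)}q=\{yq\bmod N: y\in D_j^{(p)}\}$ and $D_j^{(q)}p=\{yp\bmod N: y\in D_j^{(q)}\}$. Define $C_0=\{0\}\cup D_0\cup D_0^{(p)}q\cup D_0^{(q)}p$ and $C_1=D_1\cup D_1^{(p)}q\cup D_1^{(q)}p$, so $\mathbb{Z}_N=C_0\cup C_1$ (disjoint). The sequence $s=\{s_i\}$ of period $N$ is defined by $s_i=0$ if $i\bmod N\in C_0$ and $s_i=1$ if $i\bmod N\in C_1$. For a binary sequence $s$ of period $N$, let $S(2)=\sum_{i=0}^{N-1}s_i2^{i}$; its 2-adic complexity is $\varphi_2(s)=\left\lfloor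 \log_2\!\left(\frac{2^{N}-1}{\gcd(2^{N}-1,S(2))}+1\right)\right\rfloor$. *)

theory Defs
  imports "HOL-Number_Theory.Number_Theory"
begin

definition wh_x :: "nat \<Rightarrow> nat \<Rightarrow> nat \<Rightarrow> nat" where
  "wh_x p q g = (THE x. x < p * q \<and> [x = g] (mod p) \<and> [x = 1] (mod q))"

definition wh_e :: "nat \<Rightarrow> nat \<Rightarrow> nat" where
  "wh_e p q = (p - 1) * (q - 1) div 2"

definition wh_D :: "nat \<Rightarrow> nat \<Rightarrow> nat \<Rightarrow> nat \<Rightarrow> nat set" where
  "wh_D p q g i = {(g ^ s * wh_x p q g ^ i) mod (p * q) | s. s < wh_e p q}"

definition cyc_D :: "nat \<Rightarrow> nat \<Rightarrow> nat \<Rightarrow> nat set" where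
  "cyc_D r g j = {g ^ (2 * t + j) mod r | t. t < (r - 1) div 2}"

definition wh_C0 :: "nat \<Rightarrow> nat \<Rightarrow> nat \<Rightarrow> nat set" where
  "wh_C0 p q g = {0} \<union> wh_D p q g 0
     \<union> {(y * q) mod (p * q) | y. y \<in> cyc_D p g 0}
     \<union> {(y * p) mod (p * q) | y. y \<in> cyc_D q g 0}"

definition wh_C1 :: "nat \<Rightarrow> nat \<Rightarrow> nat \<Rightarrow> nat set" where
  "wh_C1 p q g = wh_D p q g 1
     \<union> {(y * q) mod (p * q) | y. y \<in> cyc_D p g 1}
     \<union> {(y * p) mod (p * q) | y. y \<in> cyc_D q g 1}"

(* s_i = 0 if i mod N \<in> C_0, s_i = 1 if i mod N \<in> C_1 (C_0, C_1 partition Z_N) *)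
definition wh_seq :: "nat \<Rightarrow> nat \<Rightarrow> nat \<Rightarrow> nat \<Rightarrow> nat" where
  "wh_seq p q g i = (if i mod (p * q) \<in> wh_C1 p q g then 1 else 0)"

definition two_adic_complexity :: "(nat \<Rightarrow> nat) \<Rightarrow> nat \<Rightarrow> int" where
  "two_adic_complexity s N =
     (let S = (\<Sum>i<N. s i * 2 ^ i);
          M = (2::nat) ^ N - 1
      in \<lfloor>log 2 (real (M div gcd M S) + 1)\<rfloor>)"

end

theory Submission
  imports Defs
begin

(* Write \<chi>\<^sub>p, \<chi>\<^sub>q for the quadratic characters modulo p and q, N = p q and M = 2^N - 1.
   Because g is a common primitive root and gcd(p - 1, q - 1) = 2, the Whiteman class D\<^sub>1 is
   exactly the set of units u with \<chi>\<^sub>p(u) \<chi>\<^sub>q(u) = -1, so 2 s\<^sub>u is an explicit combination of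
   character values. The Chinese remainder theorem and quadratic reciprocity (p = 1 mod 4) then give
   2 S(2) = -(1 + G\<^sub>p)(1 + G\<^sub>q) (mod M) with the Gauss sums G\<^sub>p = \<Sum>\<^sub>a \<chi>\<^sub>p(a) 2^(q a) and
   G\<^sub>q = \<Sum>\<^sub>b \<chi>\<^sub>q(b) 2^(p b). Let d be a prime dividing M and S(2). If d divides 1 + G\<^sub>p, then
   2^q is a nontrivial p-th root of unity modulo d, so p divides the order of 2 and p < d, while
   G\<^sub>p^2 = \<chi>\<^sub>p(-1) p = p (mod d) forces d \<le> p - 1. If d divides 1 + G\<^sub>q, the same argument
   gives q < d and d | q + 1 (as \<chi>\<^sub>q(-1) = -1), so d = q + 1 is even, impossible. Hence
   gcd(M, S(2)) = 1 and the 2-adic complexity is N. *)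

section \<open>The Legendre symbol\<close>

lemma cong_sign_eq:
  fixes x y m :: int
  assumes "m > 2" "[x = y] (mod m)" "x \<in> {-1, 0, 1}" "y \<in> {-1, 0, 1}"
  shows "x = y"
proof -
  obtain k where k: "y - x = m * k"
    using assms(2) by (metis cong_iff_dvd_diff cong_sym dvdE)
  have "m * \<bar>k\<bar> \<le> 2" using assms(1,3,4) k by (auto simp: abs_mult)
  moreover have "m * 1 \<le> m * \<bar>k\<bar>" if "k \<noteq> 0"
    using assms(1) that by (intro mult_left_mono) auto
  ultimately show ?thesis using assms(1) k by fastforce
qed

lemma Legendre_values: "Legendre a p \<in> {-1, 0, 1}"
  by (simp add: Legendre_def)

lemma Legendre_eq_0_iff: "Legendre a p = 0 \<longleftrightarrow> p dvd a"
  by (simp add: Legendre_def cong_0_iff)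

lemma Legendre_cong:
  assumes "[a = b] (mod p)"
  shows "Legendre a p = Legendre b p"
proof -
  have "QuadRes p a \<longleftrightarrow> QuadRes p b"
    using assms unfolding QuadRes_def by (meson cong_sym cong_trans)
  moreover have "[a = 0] (mod p) \<longleftrightarrow> [b = 0] (mod p)"
    using assms by (meson cong_sym cong_trans)
  ultimately show ?thesis by (simp add: Legendre_def)
qed

lemma Legendre_eq_of_cong:
  assumes "p > 2" "[Legendre a (int p) = c] (mod p)" "c \<in> {-1, 0, 1}"
  shows "Legendre a (int p) = c"
  using cong_sign_eq[OF _ assms(2) Legendre_values assms(3)] assms(1) by simp

lemma Legendre_mult:
  assumes "prime p" "p > 2"
  shows "Legendre (a * b) (int p) = Legendre a (int p) * Legendre b (int p)"
proof -
  have "[Legendre a (int p) * Legendre b (int p) = a ^ ((p - 1) div 2) * b ^ ((p - 1) div 2)] (mod p)"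
    by (intro cong_mult euler_criterion assms)
  also have "[a ^ ((p - 1) div 2) * b ^ ((p - 1) div 2) = Legendre (a * b) (int p)] (mod p)"
    using cong_sym[OF euler_criterion[OF assms, of "a * b"]] by (simp add: power_mult_distrib)
  finally have "[Legendre (a * b) (int p) = Legendre a (int p) * Legendre b (int p)] (mod p)"
    by (rule cong_sym)
  moreover have "Legendre a (int p) * Legendre b (int p) \<in> {-1, 0, 1}"
    using Legendre_values[of a p] Legendre_values[of b p] by auto
  ultimately show ?thesis using assms(2) by (rule Legendre_eq_of_cong[rotated])
qed

lemma Legendre_minus_one:
  assumes "prime p" "p > 2"
  shows "Legendre (-1) (int p) = (-1) ^ ((p - 1) div 2)"
proof -
  have "(-1::int) ^ ((p - 1) div 2) \<in> {-1, 0, 1}"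
    by (cases "even ((p - 1) div 2)") auto
  thus ?thesis using euler_criterion[OF assms] assms(2) by (intro Legendre_eq_of_cong) auto
qed

lemma Legendre_primroot:
  assumes "prime p" "p > 2" "residue_primroot p g"
  shows "Legendre (int g) (int p) = -1"
proof -
  have "coprime p g" and ord: "ord p g = p - 1"
    using assms by (auto simp: residue_primroot_def totient_prime)
  hence "\<not> p dvd g" using assms(1) by (metis coprime_absorb_left not_prime_unit)
  hence "Legendre (int g) (int p) \<noteq> 0" by (simp add: Legendre_eq_0_iff)
  moreover have "Legendre (int g) (int p) \<noteq> 1"
  proof
    assume "Legendre (int g) (int p) = 1"
    with euler_criterion[OF assms(1,2), of "int g"]
    have "[g ^ ((p - 1) div 2) = 1] (mod p)"
      by (metis cong_int_iff cong_sym of_nat_1 of_nat_power)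
    hence "p - 1 dvd (p - 1) div 2" using ord ord_divides by metis
    thus False using assms(2) by (auto dest: dvd_imp_le)
  qed
  ultimately show ?thesis using Legendre_values[of "int g" "int p"] by auto
qed

section \<open>Quadratic Gauss sums\<close>

definition qchar :: "nat \<Rightarrow> nat \<Rightarrow> int" where
  "qchar r a = Legendre (int a) (int r)"

lemma qchar_eq_0_iff: "qchar r a = 0 \<longleftrightarrow> r dvd a"
  by (simp add: qchar_def Legendre_eq_0_iff)

lemma qchar_0 [simp]: "qchar r 0 = 0"
  by (simp add: qchar_eq_0_iff)

lemma qchar_values: "qchar r a \<in> {-1, 0, 1}"
  unfolding qchar_def by (rule Legendre_values)

lemma qchar_unit: "\<not> r dvd a \<Longrightarrow> qchar r a = 1 \<or> qchar r a = -1"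
  using qchar_values[of r a] qchar_eq_0_iff[of r a] by auto

lemma qchar_square: "\<not> r dvd a \<Longrightarrow> qchar r a * qchar r a = 1"
  by (simp add: qchar_def Legendre_def cong_0_iff)

lemma qchar_cong: "[a = b] (mod r) \<Longrightarrow> qchar r a = qchar r b"
  unfolding qchar_def by (rule Legendre_cong) (simp add: cong_int_iff)

lemma qchar_mod [simp]: "qchar r (a mod r) = qchar r a"
  by (rule qchar_cong) (simp add: cong_def)

lemma bij_betw_mult_mod:
  fixes c r :: nat
  assumes "coprime c r" "r > 0"
  shows "bij_betw (\<lambda>a. (c * a) mod r) {..<r} {..<r}"
proof -
  have "inj_on (\<lambda>a. (c * a) mod r) {..<r}"
  proof (rule inj_onI)
    fix a b assume "a \<in> {..<r}" "b \<in> {..<r}" "(c * a) mod r = (c * b) mod r"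
    thus "a = b" using cong_mult_lcancel_nat[OF assms(1)] by (auto simp: cong_def)
  qed
  moreover have "(\<lambda>a. (c * a) mod r) ` {..<r} \<subseteq> {..<r}" using assms(2) by auto
  ultimately show ?thesis
    by (simp add: bij_betw_def card_subset_eq card_image)
qed

lemma power_cong_mod_exponent:
  fixes z d :: "'a :: unique_euclidean_semiring"
  assumes "[z ^ r = 1] (mod d)"
  shows "[z ^ n = z ^ (n mod r)] (mod d)"
proof -
  have "z ^ n = (z ^ r) ^ (n div r) * z ^ (n mod r)"
    by (metis mult_div_mod_eq power_add power_mult)
  also have "[\<dots> = 1 ^ (n div r) * z ^ (n mod r)] (mod d)"
    using assms by (intro cong_mult cong_pow cong_refl)
  finally show ?thesis by simp
qed

lemma sum_powers_cong_0:
  fixes z d :: int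
  assumes "prime d" "r > 0" "[z ^ r = 1] (mod d)" "\<not> [z = 1] (mod d)" "coprime k r"
  shows "[(\<Sum>a<r. z ^ (a * k)) = 0] (mod d)"
proof -
  have "[(\<Sum>a<r. z ^ (a * k)) = (\<Sum>a<r. z ^ ((k * a) mod r))] (mod d)"
    using power_cong_mod_exponent[OF assms(3)] by (intro cong_sum) (simp add: mult.commute)
  also have "(\<Sum>a<r. z ^ ((k * a) mod r)) = (\<Sum>a<r. z ^ a)"
    using sum.reindex_bij_betw[OF bij_betw_mult_mod[OF assms(5,2)]] by simp
  finally have sum: "[(\<Sum>a<r. z ^ (a * k)) = (\<Sum>a<r. z ^ a)] (mod d)" .
  have "d dvd (z - 1) * (\<Sum>a<r. z ^ a)"
    using assms(3) by (simp add: power_diff_1_eq[symmetric] cong_iff_dvd_diff)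
  moreover have "\<not> d dvd z - 1" using assms(4) by (simp add: cong_iff_dvd_diff)
  ultimately have "[(\<Sum>a<r. z ^ a) = 0] (mod d)"
    using assms(1) by (simp add: prime_dvd_mult_iff cong_0_iff)
  with sum show ?thesis by (rule cong_trans)
qed

definition gauss_sum :: "nat \<Rightarrow> int \<Rightarrow> int" where
  "gauss_sum r z = (\<Sum>a<r. qchar r a * z ^ a)"

context
  fixes r :: nat
  assumes r: "prime r" "r > 2"
begin

lemma qchar_mult: "qchar r (a * b) = qchar r a * qchar r b"
  unfolding qchar_def using Legendre_mult[OF r] by simp

lemma qchar_minus_one: "qchar r (r - 1) = (-1) ^ ((r - 1) div 2)"
proof -
  have "[int (r - 1) = -1] (mod int r)"
    using r by (simp add: cong_iff_dvd_diff of_nat_diff)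
  thus ?thesis unfolding qchar_def using Legendre_minus_one[OF r] Legendre_cong by metis
qed

lemma qchar_primroot_power:
  assumes "residue_primroot r g"
  shows "qchar r (g ^ k) = (-1) ^ k"
proof (induction k)
  case 0
  have "QuadRes (int r) 1" unfolding QuadRes_def by (rule exI[of _ 1]) simp
  moreover have "\<not> [1 = 0] (mod int r)" using r by (simp add: cong_0_iff)
  ultimately show ?case by (simp add: qchar_def Legendre_def)
next
  case (Suc k)
  have "qchar r g = -1" unfolding qchar_def by (rule Legendre_primroot[OF r assms])
  with Suc show ?case by (simp add: qchar_mult)
qed

lemma qchar_eq_primroot_power:
  assumes "residue_primroot r g" "\<not> r dvd y"
  obtains k where "k < r - 1" "[g ^ k = y] (mod r)" "qchar r y = (-1) ^ k"
proof -
  have "coprime (y mod r) r"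
    using prime_imp_coprime[OF r(1) assms(2)] r by (simp add: coprime_commute)
  moreover have "0 < y mod r" "y mod r < r"
    using assms(2) r by (simp_all add: mod_greater_zero_iff_not_dvd)
  ultimately have "y mod r \<in> totatives r" by (simp add: totatives_def)
  moreover have "totatives r = (\<lambda>i. g ^ i mod r) ` {..<r - 1}"
    using residue_primroot_is_generator[OF _ assms(1)] r
    by (simp add: bij_betw_def totient_prime)
  ultimately obtain k where k: "k < r - 1" "g ^ k mod r = y mod r" by auto
  hence gk: "[g ^ k = y] (mod r)" by (simp add: cong_def)
  hence "qchar r y = (-1) ^ k"
    using qchar_cong qchar_primroot_power[OF assms(1)] by metis
  with that k(1) gk show ?thesis by blast
qed

lemma qchar_nonresidue_exists: "\<exists>n. qchar r n = -1"
proof -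
  obtain g where "g \<in> totatives r" "ord r g = r - 1"
    using residue_prime_has_primroot[OF r(1)] by blast
  hence "residue_primroot r g"
    using r by (auto simp: residue_primroot_def totatives_def totient_prime coprime_commute)
  thus ?thesis using qchar_primroot_power[of g 1] by auto
qed

lemma sum_qchar_eq_0: "(\<Sum>a<r. qchar r a) = 0"
proof -
  obtain n where n: "qchar r n = -1" using qchar_nonresidue_exists by blast
  hence "coprime n r"
    using prime_imp_coprime[OF r(1)] qchar_eq_0_iff[of r n] by (auto simp: coprime_commute)
  hence "(\<Sum>a<r. qchar r a) = (\<Sum>a<r. qchar r ((n * a) mod r))"
    using r by (intro sum.reindex_bij_betw[OF bij_betw_mult_mod, symmetric]) auto
  also have "\<dots> = - (\<Sum>a<r. qchar r a)"
    by (simp add: qchar_mult n sum_negf)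
  finally show ?thesis by simp
qed

lemma gauss_sum_twist_cong:
  fixes z d :: int
  assumes z: "[z ^ r = 1] (mod d)" and a: "a < r"
  shows "[qchar r a * z ^ a * gauss_sum r z = (\<Sum>c<r. qchar r c * z ^ (a * (1 + c)))] (mod d)"
proof (cases "a = 0")
  case True
  thus ?thesis using sum_qchar_eq_0 by simp
next
  case False
  hence "\<not> r dvd a" using a by (auto dest: dvd_imp_le)
  hence cop: "coprime a r" and sq: "qchar r a * qchar r a = 1"
    using prime_imp_coprime[OF r(1)] qchar_square by (auto simp: coprime_commute)
  have "qchar r a * z ^ a * gauss_sum r z
      = (\<Sum>c<r. qchar r a * z ^ a * (qchar r ((a * c) mod r) * z ^ ((a * c) mod r)))"
    unfolding gauss_sum_def sum_distrib_left using r
    by (intro sum.reindex_bij_betw[OF bij_betw_mult_mod[OF cop], symmetric]) auto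
  also have "[\<dots> = (\<Sum>c<r. qchar r c * z ^ (a * (1 + c)))] (mod d)"
  proof (rule cong_sum)
    fix c
    have "[z ^ a * z ^ ((a * c) mod r) = z ^ (a * (1 + c))] (mod d)"
      using cong_mult[OF cong_refl[of "z ^ a"] power_cong_mod_exponent[OF z, of "a * c"]]
      by (simp add: power_add[symmetric] cong_sym distrib_left)
    moreover have "qchar r a * z ^ a * (qchar r ((a * c) mod r) * z ^ ((a * c) mod r))
        = (qchar r a * qchar r a) * qchar r c * (z ^ a * z ^ ((a * c) mod r))"
      unfolding qchar_mod qchar_mult by (simp only: ac_simps)
    ultimately show "[qchar r a * z ^ a * (qchar r ((a * c) mod r) * z ^ ((a * c) mod r))
        = qchar r c * z ^ (a * (1 + c))] (mod d)"
      unfolding sq mult_1 by (simp only: cong_scalar_left)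
  qed
  finally show ?thesis .
qed

lemma gauss_sum_square_cong:
  fixes z d :: int
  assumes d: "prime d" and z: "[z ^ r = 1] (mod d)" "\<not> [z = 1] (mod d)"
  shows "[gauss_sum r z ^ 2 = qchar r (r - 1) * int r] (mod d)"
proof -
  have "gauss_sum r z ^ 2 = (\<Sum>a<r. qchar r a * z ^ a * gauss_sum r z)"
    by (simp add: power2_eq_square gauss_sum_def sum_distrib_right)
  also have "[\<dots> = (\<Sum>a<r. \<Sum>c<r. qchar r c * z ^ (a * (1 + c)))] (mod d)"
    using gauss_sum_twist_cong[OF z(1)] by (intro cong_sum) simp
  also have "(\<Sum>a<r. \<Sum>c<r. qchar r c * z ^ (a * (1 + c)))
      = (\<Sum>c<r. qchar r c * (\<Sum>a<r. z ^ (a * (1 + c))))"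
    by (subst sum.swap) (simp add: sum_distrib_left)
  also have "\<dots> = (\<Sum>c<r - 1. qchar r c * (\<Sum>a<r. z ^ (a * (1 + c))))
      + qchar r (r - 1) * (\<Sum>a<r. z ^ (a * r))"
  proof -
    obtain r' where "r = Suc r'" using r by (cases r) auto
    thus ?thesis by simp
  qed
  also have "[\<dots> = 0 + qchar r (r - 1) * int r] (mod d)"
  proof (intro cong_add cong_mult cong_refl)
    have "[(\<Sum>a<r. z ^ (a * (1 + c))) = 0] (mod d)" if "c < r - 1" for c
    proof (rule sum_powers_cong_0[OF d _ z])
      have "\<not> r dvd 1 + c" using that by (auto dest: dvd_imp_le)
      thus "coprime (1 + c) r" using prime_imp_coprime[OF r(1)] coprime_commute by blast
    qed (use r in auto)
    hence "[(\<Sum>c<r - 1. qchar r c * (\<Sum>a<r. z ^ (a * (1 + c))))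
        = (\<Sum>c<r - 1. qchar r c * 0)] (mod d)"
      by (intro cong_sum cong_mult cong_refl) auto
    thus "[(\<Sum>c<r - 1. qchar r c * (\<Sum>a<r. z ^ (a * (1 + c)))) = 0] (mod d)" by simp
    have "[z ^ (a * r) = 1] (mod d)" for a
      using cong_pow[OF z(1), of a] by (simp add: power_mult[symmetric] mult.commute)
    hence "[(\<Sum>a<r. z ^ (a * r)) = (\<Sum>a<r. 1)] (mod d)" by (intro cong_sum) auto
    thus "[(\<Sum>a<r. z ^ (a * r)) = int r] (mod d)" by simp
  qed
  finally show ?thesis by simp
qed

lemma gauss_sum_not_cong_1:
  fixes z d :: int
  assumes "prime d" "d dvd 1 + gauss_sum r z"
  shows "\<not> [z = 1] (mod d)"
proof
  assume "[z = 1] (mod d)"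
  hence "[gauss_sum r z = (\<Sum>a<r. qchar r a * 1 ^ a)] (mod d)"
    unfolding gauss_sum_def by (intro cong_sum cong_mult cong_refl cong_pow)
  hence "[1 + gauss_sum r z = 1] (mod d)" using sum_qchar_eq_0 by (simp add: cong_add_lcancel_0)
  moreover have "[1 + gauss_sum r z = 0] (mod d)" using assms(2) by (simp add: cong_0_iff)
  ultimately have "d dvd 1" by (metis cong_0_iff cong_sym cong_trans)
  with assms(1) show False by (simp add: not_prime_unit)
qed

lemma prime_dvd_1_plus_gauss_sum:
  fixes d s :: nat
  assumes d: "prime d" and one: "[2 ^ (r * s) = 1] (mod d)"
    and dvd: "int d dvd 1 + gauss_sum r (2 ^ s)"
  shows "r dvd ord d 2" and "[qchar r (r - 1) * int r = 1] (mod int d)"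
proof -
  have z1: "\<not> [(2::int) ^ s = 1] (mod int d)"
    using gauss_sum_not_cong_1 d dvd by simp
  have zr: "[((2::int) ^ s) ^ r = 1] (mod int d)"
    using one by (simp add: cong_int_iff[symmetric] power_mult[symmetric] mult.commute)
  show "r dvd ord d 2"
  proof (rule ccontr)
    assume "\<not> r dvd ord d 2"
    hence "coprime (ord d 2) r" using prime_imp_coprime[OF r(1)] coprime_commute by blast
    moreover have "ord d 2 dvd r * s" using one ord_divides by blast
    ultimately have "[2 ^ s = 1] (mod d)" using ord_divides coprime_dvd_mult_right_iff by blast
    with z1 show False by (simp add: cong_int_iff[symmetric])
  qed
  have "[gauss_sum r (2 ^ s) = -1] (mod int d)"
    using dvd by (simp add: cong_iff_dvd_diff add.commute)
  hence "[1 = gauss_sum r (2 ^ s) ^ 2] (mod int d)"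
    using cong_pow[of _ "-1" _ 2] cong_sym by fastforce
  also have "[gauss_sum r (2 ^ s) ^ 2 = qchar r (r - 1) * int r] (mod int d)"
    using d zr z1 by (intro gauss_sum_square_cong) simp_all
  finally show "[qchar r (r - 1) * int r = 1] (mod int d)" by (rule cong_sym)
qed

lemma mem_cyc_D1_iff:
  assumes "residue_primroot r g"
  shows "y \<in> cyc_D r g 1 \<longleftrightarrow> y < r \<and> qchar r y = -1"
proof
  assume "y \<in> cyc_D r g 1"
  then obtain t where t: "y = g ^ (2 * t + 1) mod r" by (auto simp: cyc_D_def)
  hence "qchar r y = (-1) ^ (2 * t + 1)"
    using qchar_primroot_power[OF assms] by (simp only: qchar_mod)
  thus "y < r \<and> qchar r y = -1" using t r by simp
next
  assume y: "y < r \<and> qchar r y = -1"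
  hence "\<not> r dvd y" using qchar_eq_0_iff by fastforce
  then obtain k where k: "k < r - 1" "[g ^ k = y] (mod r)" "qchar r y = (-1) ^ k"
    using qchar_eq_primroot_power[OF assms] by blast
  hence "odd k" using y by auto
  then obtain t where "k = 2 * t + 1" by (rule oddE)
  moreover have "y = g ^ k mod r" using k(2) y by (simp add: cong_def)
  ultimately show "y \<in> cyc_D r g 1" using k(1) by (auto simp: cyc_D_def)
qed

lemma mem_scaled_cyc_D1_iff:
  assumes "residue_primroot r g" "u < r * m"
  shows "u \<in> {(y * m) mod (r * m) | y. y \<in> cyc_D r g 1} \<longleftrightarrow> m dvd u \<and> qchar r (u div m) = -1"
proof -
  have m: "m > 0" using assms(2) by (cases m) auto
  have "u \<in> {(y * m) mod (r * m) | y. y \<in> cyc_D r g 1}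
      \<longleftrightarrow> (\<exists>y. u = (y * m) mod (r * m) \<and> y < r \<and> qchar r y = -1)"
    unfolding mem_Collect_eq mem_cyc_D1_iff[OF assms(1)] ..
  also have "\<dots> \<longleftrightarrow> (\<exists>y<r. u = y * m \<and> qchar r y = -1)"
    using m by (intro ex_cong1) auto
  also have "\<dots> \<longleftrightarrow> m dvd u \<and> qchar r (u div m) = -1"
  proof
    assume "\<exists>y<r. u = y * m \<and> qchar r y = -1"
    thus "m dvd u \<and> qchar r (u div m) = -1" using m by auto
  next
    assume h: "m dvd u \<and> qchar r (u div m) = -1"
    hence "u = u div m * m" by simp
    moreover have "u div m < r" using assms(2) m by (simp add: div_less_iff_less_mult)
    ultimately show "\<exists>y<r. u = y * m \<and> qchar r y = -1" using h by blast
  qed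
  finally show ?thesis .
qed

end

(* Here (P, P + 2) stands for (p - 1, q - 1), whose gcd is 2: s = b + (P + 2) k satisfies
   s = b (mod P + 2) and s + 1 = a (mod P) as soon as a + b is odd. *)
lemma twin_moduli_exponent:
  fixes P a b :: nat
  assumes "even P" "P > 0" "odd (a + b)"
  obtains k where "[b + (P + 2) * k + 1 = a] (mod P)"
proof -
  have "even (a + (P - 1) * (b + 1))" using assms by auto
  then obtain j where j: "a + (P - 1) * (b + 1) = 2 * j" by (rule dvdE)
  have "(P - 1) * (b + 1) + (b + 1) = P * (b + 1)" using assms(2) by (cases P) auto
  hence "b + (P + 2) * j + 1 = a + P * (j + b + 1)"
    using j by (simp add: algebra_simps)
  hence "[b + (P + 2) * j + 1 = a] (mod P)" unfolding cong_def by (simp only: mod_mult_self2)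
  thus ?thesis by (rule that)
qed

lemma sum_nonzero_powers_two:
  assumes "n > 0"
  shows "(\<Sum>i<n. if i = 0 then 0 else (2::int) ^ i) = 2 ^ n - 2"
proof -
  have "(\<Sum>i<n. if i = 0 then 0 else (2::int) ^ i) = (\<Sum>i<n. 2 ^ i - (if i = 0 then 1 else 0))"
    by (intro sum.cong) auto
  also have "\<dots> = (\<Sum>i<n. 2 ^ i) - 1"
    using assms by (simp add: sum_subtractf sum.delta)
  also have "\<dots> = 2 ^ n - 2" using power_diff_1_eq[of "2::int" n] by simp
  finally show ?thesis .
qed

lemma sum_lessThan_multiples:
  fixes f :: "nat \<Rightarrow> 'a :: comm_monoid_add"
  assumes "m > 0"
  shows "(\<Sum>u<m * n. if m dvd u then f u else 0) = (\<Sum>y<n. f (m * y))"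
proof -
  have "{u \<in> {..<m * n}. m dvd u} = (\<lambda>y. m * y) ` {..<n}"
    using assms by (auto elim!: dvdE)
  moreover have "inj_on (\<lambda>y. m * y) {..<n}" using assms by (auto simp: inj_on_def)
  ultimately show ?thesis
    by (simp add: sum.inter_filter[symmetric] sum.reindex)
qed

lemma bij_betw_crt:
  fixes p q :: nat
  assumes "coprime p q"
  shows "bij_betw (\<lambda>(a, b). (q * a + p * b) mod (p * q)) ({..<p} \<times> {..<q}) {..<p * q}"
proof -
  let ?h = "\<lambda>(a, b). (q * a + p * b) mod (p * q)"
  have "inj_on ?h ({..<p} \<times> {..<q})"
  proof (rule inj_onI, clarify)
    fix a b a' b'
    assume a: "a < p" "a' < p" and b: "b < q" "b' < q"
      and "(q * a + p * b) mod (p * q) = (q * a' + p * b') mod (p * q)"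
    hence eq: "[q * a + p * b = q * a' + p * b'] (mod p * q)" by (simp add: cong_def)
    hence "[q * a + p * b = q * a' + p * b'] (mod p)" by (rule cong_modulus_mult_nat)
    hence "[q * a = q * a'] (mod p)" by (simp add: cong_def)
    hence "a = a'"
      using a assms cong_mult_lcancel_nat[of q p a a'] by (simp add: coprime_commute cong_def)
    from eq have "[q * a + p * b = q * a' + p * b'] (mod q)"
      by (metis cong_modulus_mult_nat mult.commute)
    hence "[p * b = p * b'] (mod q)" by (simp add: cong_def)
    hence "b = b'" using b assms cong_mult_lcancel_nat[of p q b b'] by (simp add: cong_def)
    with \<open>a = a'\<close> show "a = a' \<and> b = b'" ..
  qed
  moreover have "?h ` ({..<p} \<times> {..<q}) \<subseteq> {..<p * q}"
    using assms by (auto simp: coprime_commute)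
  ultimately show ?thesis
    by (simp add: bij_betw_def card_subset_eq card_image card_cartesian_product)
qed

lemma dvd_ord_two_le:
  assumes "prime d" "d \<noteq> 2" "r dvd ord d 2"
  shows "r \<le> d - 1"
proof -
  have "coprime d 2" using assms(1,2) primes_coprime two_is_prime_nat by blast
  hence "ord d 2 dvd d - 1" using order_divides_totient totient_prime[OF assms(1)] by metis
  moreover have "d - 1 > 0" using prime_gt_1_nat[OF assms(1)] by simp
  ultimately show ?thesis using assms(3) by (auto intro: dvd_imp_le dvd_trans)
qed

lemma two_adic_complexity_coprime:
  assumes "coprime (2 ^ N - 1) (\<Sum>i<N. s i * 2 ^ i)"
  shows "two_adic_complexity s N = int N"
proof -
  have "real (2 ^ N - 1 :: nat) + 1 = 2 ^ N" by (simp add: of_nat_diff)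
  moreover have "log 2 ((2::real) ^ N) = real N" by (simp add: log_pow_cancel)
  ultimately show ?thesis using assms by (simp add: two_adic_complexity_def Let_def)
qed

section \<open>The Whiteman sequence of twin primes\<close>

locale twin_prime_whiteman =
  fixes p q g :: nat
  assumes prime_p: "prime p" and prime_q: "prime q"
    and p_mod_4: "p mod 4 = 1" and q_mod_4: "q mod 4 = 3" and q_eq: "q = p + 2"
    and primroot_p: "residue_primroot p g" and primroot_q: "residue_primroot q g"
begin

lemma p_gt_2: "p > 2"
proof -
  have "p \<noteq> 2" using p_mod_4 by auto
  with prime_ge_2_nat[OF prime_p] show ?thesis by simp
qed

lemma q_gt_2: "q > 2"
  using p_gt_2 q_eq by simp

lemma coprime_p_q: "coprime p q"
  using prime_p prime_q q_eq by (simp add: primes_coprime)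

lemma power_cong_p: "[g ^ m = g ^ n] (mod p) \<longleftrightarrow> [m = n] (mod p - 1)"
  using primroot_p prime_p by (simp add: residue_primroot_def totient_prime order_divides_expdiff)

lemma power_cong_q: "[g ^ m = g ^ n] (mod q) \<longleftrightarrow> [m = n] (mod q - 1)"
  using primroot_q prime_q by (simp add: residue_primroot_def totient_prime order_divides_expdiff)

lemma wh_x_cong: "[wh_x p q g = g] (mod p)" "[wh_x p q g = 1] (mod q)"
proof -
  have "\<exists>!x. x < p * q \<and> [x = g] (mod p) \<and> [x = 1] (mod q)"
    using coprime_p_q p_gt_2 q_gt_2 by (intro binary_chinese_remainder_unique_nat) auto
  from theI'[OF this] show "[wh_x p q g = g] (mod p)" "[wh_x p q g = 1] (mod q)"
    unfolding wh_x_def by auto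
qed

lemma dvd_wh_e: "p - 1 dvd wh_e p q" "q - 1 dvd wh_e p q" and wh_e_pos: "wh_e p q > 0"
proof -
  have "even (p - 1)" using prime_odd_nat[OF prime_p p_gt_2] p_gt_2 by simp
  then obtain h where h: "p - 1 = 2 * h" by (rule dvdE)
  hence "q - 1 = 2 * (h + 1)" using q_eq p_gt_2 by simp
  hence e: "wh_e p q = (p - 1) * (h + 1)" "wh_e p q = h * (q - 1)"
    using h by (simp_all add: wh_e_def)
  show "p - 1 dvd wh_e p q" unfolding e(1) by simp
  show "q - 1 dvd wh_e p q" unfolding e(2) by simp
  show "wh_e p q > 0" using e(1) p_gt_2 by simp
qed

lemma qchar_product_of_mem_wh_D1:
  assumes "u \<in> wh_D p q g 1"
  shows "qchar p u * qchar q u = -1"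
proof -
  obtain s where "u = (g ^ s * wh_x p q g) mod (p * q)" using assms by (auto simp: wh_D_def)
  hence "[u = g ^ s * wh_x p q g] (mod p * q)" by (simp add: cong_def)
  hence "[u = g ^ s * wh_x p q g] (mod p)" "[u = g ^ s * wh_x p q g] (mod q)"
    using cong_modulus_mult_nat mult.commute[of p q] by metis+
  hence "[u = g ^ s * g] (mod p)" "[u = g ^ s * 1] (mod q)"
    using cong_mult[OF cong_refl wh_x_cong(1)] cong_mult[OF cong_refl wh_x_cong(2)]
    by (auto intro: cong_trans)
  hence "qchar p u = qchar p (g ^ s) * qchar p g" "qchar q u = qchar q (g ^ s)"
    using qchar_cong qchar_mult[OF prime_p p_gt_2] by auto
  thus ?thesis
    using qchar_primroot_power[OF prime_p p_gt_2 primroot_p]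
      qchar_primroot_power[OF prime_p p_gt_2 primroot_p, of 1]
      qchar_primroot_power[OF prime_q q_gt_2 primroot_q]
    by simp
qed

lemma wh_e_exponent:
  assumes "odd (a + b)"
  obtains s where "s < wh_e p q" "[s + 1 = a] (mod p - 1)" "[s = b] (mod q - 1)"
proof -
  have "even (p - 1)" "p - 1 > 0"
    using prime_odd_nat[OF prime_p p_gt_2] p_gt_2 by auto
  then obtain k where k: "[b + (p - 1 + 2) * k + 1 = a] (mod p - 1)"
    using twin_moduli_exponent assms by blast
  define s where "s = (b + (q - 1) * k) mod wh_e p q"
  have "[s = b + (q - 1) * k] (mod p - 1)"
    using dvd_wh_e(1) unfolding s_def cong_def by (simp add: mod_mod_cancel)
  hence "[s + 1 = b + (q - 1) * k + 1] (mod p - 1)" by (rule cong_add[OF _ cong_refl])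
  also have "q - 1 = p - 1 + 2" using q_eq p_gt_2 by simp
  finally have "[s + 1 = a] (mod p - 1)" using k by (rule cong_trans)
  moreover have "[s = b] (mod q - 1)"
    using dvd_wh_e(2) unfolding s_def cong_def by (simp add: mod_mod_cancel)
  moreover have "s < wh_e p q" using wh_e_pos unfolding s_def by simp
  ultimately show ?thesis using that by blast
qed

lemma mem_wh_D1_of_qchar_product:
  assumes u: "u < p * q" and h: "qchar p u * qchar q u = -1"
  shows "u \<in> wh_D p q g 1"
proof -
  have "qchar p u \<noteq> 0" "qchar q u \<noteq> 0" using h by auto
  hence "\<not> p dvd u" "\<not> q dvd u" by (simp_all add: qchar_eq_0_iff)
  obtain a where a: "[g ^ a = u] (mod p)" "qchar p u = (-1) ^ a"
    using qchar_eq_primroot_power[OF prime_p p_gt_2 primroot_p \<open>\<not> p dvd u\<close>] by blast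
  obtain b where b: "[g ^ b = u] (mod q)" "qchar q u = (-1) ^ b"
    using qchar_eq_primroot_power[OF prime_q q_gt_2 primroot_q \<open>\<not> q dvd u\<close>] by blast
  have "odd (a + b)"
    using h a(2) b(2) by (auto simp: power_add[symmetric] minus_one_power_iff split: if_splits)
  then obtain s where s: "s < wh_e p q" "[s + 1 = a] (mod p - 1)" "[s = b] (mod q - 1)"
    by (rule wh_e_exponent)
  from s(2) have "[g ^ (s + 1) = g ^ a] (mod p)" by (simp only: power_cong_p)
  hence "[g ^ s * g = u] (mod p)" using a(1) by (simp add: mult.commute cong_trans)
  hence "[g ^ s * wh_x p q g = u] (mod p)"
    using cong_mult[OF cong_refl wh_x_cong(1)] cong_trans by blast
  moreover from s(3) have "[g ^ s = u] (mod q)" using b(1) power_cong_q cong_trans by blast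
  hence "[g ^ s * wh_x p q g = u] (mod q)"
    using cong_mult[OF cong_refl wh_x_cong(2)] cong_trans by fastforce
  ultimately have "[g ^ s * wh_x p q g = u] (mod p * q)"
    using coprime_p_q by (rule coprime_cong_mult_nat)
  hence "u = (g ^ s * wh_x p q g ^ 1) mod (p * q)" using u by (simp add: cong_def)
  thus ?thesis using s(1) unfolding wh_D_def by blast
qed

lemma mem_wh_D1_iff:
  "u < p * q \<Longrightarrow> u \<in> wh_D p q g 1 \<longleftrightarrow> qchar p u * qchar q u = -1"
  using qchar_product_of_mem_wh_D1 mem_wh_D1_of_qchar_product by blast

lemma mem_wh_C1_iff:
  assumes u: "u < p * q"
  shows "u \<in> wh_C1 p q g \<longleftrightarrow> qchar p u * qchar q u = -1
    \<or> (q dvd u \<and> qchar p (u div q) = -1) \<or> (p dvd u \<and> qchar q (u div p) = -1)"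
proof -
  have "u \<in> {(y * q) mod (p * q) | y. y \<in> cyc_D p g 1} \<longleftrightarrow> q dvd u \<and> qchar p (u div q) = -1"
    using mem_scaled_cyc_D1_iff[OF prime_p p_gt_2 primroot_p u] .
  moreover have "u \<in> {(y * p) mod (p * q) | y. y \<in> cyc_D q g 1} \<longleftrightarrow> p dvd u \<and> qchar q (u div p) = -1"
    using mem_scaled_cyc_D1_iff[OF prime_q q_gt_2 primroot_q, of u p] u by (simp add: mult.commute)
  ultimately show ?thesis unfolding wh_C1_def using mem_wh_D1_iff[OF u] by blast
qed

lemma not_dvd_both:
  assumes "0 < u" "u < p * q"
  shows "\<not> (p dvd u \<and> q dvd u)"
proof
  assume "p dvd u \<and> q dvd u"
  hence "p * q dvd u" using coprime_p_q by (simp add: divides_mult)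
  thus False using assms by (auto dest: dvd_imp_le)
qed

lemma wh_seq_eq:
  assumes u: "u < p * q"
  shows "2 * int (wh_seq p q g u) = (if u = 0 then 0 else 1) - qchar p u * qchar q u
    - (if q dvd u then qchar p (u div q) else 0) - (if p dvd u then qchar q (u div p) else 0)"
proof -
  have seq: "wh_seq p q g u = (if u \<in> wh_C1 p q g then 1 else 0)"
    using u by (simp add: wh_seq_def)
  consider "u = 0" | "u > 0" "q dvd u" "\<not> p dvd u" | "u > 0" "p dvd u" "\<not> q dvd u"
    | "\<not> p dvd u" "\<not> q dvd u"
    using not_dvd_both[OF _ u] by blast
  thus ?thesis
  proof cases
    case 1
    thus ?thesis using seq mem_wh_C1_iff[OF u] by simp
  next
    case 2
    hence "\<not> p dvd u div q" by (metis dvd_div_mult_self dvd_mult2)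
    thus ?thesis
      using qchar_unit[of p "u div q"] seq mem_wh_C1_iff[OF u] 2 qchar_eq_0_iff[of q u] by auto
  next
    case 3
    hence "\<not> q dvd u div p" by (metis dvd_div_mult_self dvd_mult2)
    thus ?thesis
      using qchar_unit[of q "u div p"] seq mem_wh_C1_iff[OF u] 3 qchar_eq_0_iff[of p u] by auto
  next
    case 4
    hence "u \<noteq> 0" by (metis dvd_0_right)
    thus ?thesis
      using qchar_unit[OF 4(1)] qchar_unit[OF 4(2)] seq mem_wh_C1_iff[OF u] 4 by auto
  qed
qed

lemma qchar_reciprocity: "qchar p q * qchar q p = 1"
proof -
  have "even ((p - 1) div 2)" using p_mod_4 by presburger
  thus ?thesis
    using Quadratic_Reciprocity[OF prime_p p_gt_2 prime_q q_gt_2] q_eq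
    by (simp add: qchar_def mult.commute)
qed

lemma crt_summand_cong:
  fixes a b :: nat
  defines "v \<equiv> (q * a + p * b) mod (p * q)"
  shows "[qchar p v * qchar q v * 2 ^ v = qchar p a * (2 ^ q) ^ a * (qchar q b * (2 ^ p) ^ b)]
    (mod 2 ^ (p * q) - 1)"
proof -
  have "[v = q * a] (mod p)" "[v = p * b] (mod q)"
    unfolding v_def cong_def by (simp_all add: mod_mod_cancel)
  hence "qchar p v = qchar p q * qchar p a" "qchar q v = qchar q p * qchar q b"
    using qchar_cong qchar_mult[OF prime_p p_gt_2] qchar_mult[OF prime_q q_gt_2] by metis+
  hence "qchar p v * qchar q v = qchar p a * qchar q b"
    using qchar_reciprocity by (simp add: algebra_simps)
  moreover have "[(2::int) ^ v = 2 ^ (q * a + p * b)] (mod 2 ^ (p * q) - 1)"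
    unfolding v_def
    by (rule cong_sym, rule power_cong_mod_exponent) (simp add: cong_iff_dvd_diff)
  moreover have "(2::int) ^ (q * a + p * b) = (2 ^ q) ^ a * (2 ^ p) ^ b"
    by (simp only: power_add power_mult)
  ultimately have "[qchar p v * qchar q v * 2 ^ v = qchar p a * qchar q b * ((2 ^ q) ^ a * (2 ^ p) ^ b)]
      (mod 2 ^ (p * q) - 1)"
    by (simp add: cong_mult cong_refl)
  thus ?thesis by (simp add: mult_ac)
qed

lemma sum_qchar_product_cong:
  "[(\<Sum>u<p * q. qchar p u * qchar q u * 2 ^ u) = gauss_sum p (2 ^ q) * gauss_sum q (2 ^ p)]
     (mod 2 ^ (p * q) - 1)"
proof -
  define F :: "nat \<Rightarrow> int" where "F u = qchar p u * qchar q u * 2 ^ u" for u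
  define T :: "nat \<times> nat \<Rightarrow> int"
    where "T = (\<lambda>(a, b). qchar p a * (2 ^ q) ^ a * (qchar q b * (2 ^ p) ^ b))"
  let ?h = "\<lambda>(a, b). (q * a + p * b) mod (p * q)"
  have "(\<Sum>u<p * q. F u) = (\<Sum>x\<in>{..<p} \<times> {..<q}. F (?h x))"
    by (rule sum.reindex_bij_betw[OF bij_betw_crt[OF coprime_p_q], symmetric])
  also have "[\<dots> = (\<Sum>x\<in>{..<p} \<times> {..<q}. T x)] (mod 2 ^ (p * q) - 1)"
  proof (rule cong_sum)
    fix x :: "nat \<times> nat"
    obtain a b where "x = (a, b)" by fastforce
    thus "[F (?h x) = T x] (mod 2 ^ (p * q) - 1)"
      using crt_summand_cong[of a b] by (simp add: F_def T_def)
  qed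
  also have "(\<Sum>x\<in>{..<p} \<times> {..<q}. T x) = gauss_sum p (2 ^ q) * gauss_sum q (2 ^ p)"
    unfolding T_def gauss_sum_def by (simp only: sum_product sum.cartesian_product split_def)
  finally show ?thesis unfolding F_def .
qed

lemma sum_multiples_q:
  "(\<Sum>i<p * q. if q dvd i then qchar p (i div q) * 2 ^ i else 0) = gauss_sum p (2 ^ q)"
proof -
  have "(\<Sum>i<p * q. if q dvd i then qchar p (i div q) * 2 ^ i else 0)
      = (\<Sum>y<p. qchar p (q * y div q) * 2 ^ (q * y))"
    using sum_lessThan_multiples[of q "\<lambda>i. qchar p (i div q) * 2 ^ i" p] q_gt_2
    by (simp add: mult.commute)
  thus ?thesis using q_gt_2 by (simp add: gauss_sum_def power_mult)
qed

lemma sum_multiples_p: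
  "(\<Sum>i<p * q. if p dvd i then qchar q (i div p) * 2 ^ i else 0) = gauss_sum q (2 ^ p)"
proof -
  have "(\<Sum>i<p * q. if p dvd i then qchar q (i div p) * 2 ^ i else 0)
      = (\<Sum>y<q. qchar q (p * y div p) * 2 ^ (p * y))"
    using sum_lessThan_multiples[of p "\<lambda>i. qchar q (i div p) * 2 ^ i" q] p_gt_2 by simp
  thus ?thesis using p_gt_2 by (simp add: gauss_sum_def power_mult)
qed

lemma period_sum_cong:
  "[2 * (\<Sum>i<p * q. int (wh_seq p q g i) * 2 ^ i)
     = - ((1 + gauss_sum p (2 ^ q)) * (1 + gauss_sum q (2 ^ p)))] (mod 2 ^ (p * q) - 1)"
proof -
  define M :: int where "M = 2 ^ (p * q) - 1"
  define U where "U = (\<Sum>i<p * q. qchar p i * qchar q i * 2 ^ i)"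
  have summand: "2 * (int (wh_seq p q g i) * 2 ^ i) = (if i = 0 then 0 else 2 ^ i)
      - qchar p i * qchar q i * 2 ^ i - (if q dvd i then qchar p (i div q) * 2 ^ i else 0)
      - (if p dvd i then qchar q (i div p) * 2 ^ i else 0)" if "i < p * q" for i
  proof -
    have "2 * (int (wh_seq p q g i) * 2 ^ i) = (2 * int (wh_seq p q g i)) * 2 ^ i" by simp
    also have "\<dots> = ((if i = 0 then 0 else 1) - qchar p i * qchar q i
        - (if q dvd i then qchar p (i div q) else 0) - (if p dvd i then qchar q (i div p) else 0)) * 2 ^ i"
      by (simp only: wh_seq_eq[OF that])
    finally show ?thesis by (simp add: left_diff_distrib)
  qed
  have "2 * (\<Sum>i<p * q. int (wh_seq p q g i) * 2 ^ i)
      = (\<Sum>i<p * q. if i = 0 then 0 else 2 ^ i) - U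
        - (\<Sum>i<p * q. if q dvd i then qchar p (i div q) * 2 ^ i else 0)
        - (\<Sum>i<p * q. if p dvd i then qchar q (i div p) * 2 ^ i else 0)"
    unfolding U_def sum_distrib_left sum_subtractf[symmetric]
    using summand by (intro sum.cong) simp_all
  also have "\<dots> = M - 1 - U - gauss_sum p (2 ^ q) - gauss_sum q (2 ^ p)"
    using sum_nonzero_powers_two[of "p * q"] p_gt_2 q_gt_2
    by (simp add: M_def sum_multiples_q sum_multiples_p)
  also have "[\<dots> = 0 - 1 - gauss_sum p (2 ^ q) * gauss_sum q (2 ^ p)
      - gauss_sum p (2 ^ q) - gauss_sum q (2 ^ p)] (mod M)"
    using sum_qchar_product_cong unfolding U_def M_def
    by (intro cong_diff cong_refl) (simp_all add: cong_0_iff)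
  finally show ?thesis unfolding M_def by (simp add: algebra_simps)
qed

lemma not_dvd_1_plus_gauss_sum_p:
  assumes "prime d" "d \<noteq> 2" "[2 ^ (p * q) = 1] (mod d)"
  shows "\<not> int d dvd 1 + gauss_sum p (2 ^ q)"
proof
  assume "int d dvd 1 + gauss_sum p (2 ^ q)"
  hence "p dvd ord d 2" "[qchar p (p - 1) * int p = 1] (mod int d)"
    using prime_dvd_1_plus_gauss_sum[OF prime_p p_gt_2 assms(1,3)] by blast+
  moreover have "qchar p (p - 1) = 1"
    using qchar_minus_one[OF prime_p p_gt_2] p_mod_4 by (simp add: minus_one_power_iff, presburger)
  ultimately have "p \<le> d - 1" "int d dvd int p - 1"
    using dvd_ord_two_le[OF assms(1,2)] by (auto simp: cong_iff_dvd_diff)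
  moreover have "int p - 1 = int (p - 1)" using p_gt_2 by simp
  ultimately have "p \<le> d - 1" "d dvd p - 1" by (simp_all only: int_dvd_int_iff)
  thus False using p_gt_2 by (auto dest: dvd_imp_le)
qed

lemma not_dvd_1_plus_gauss_sum_q:
  assumes "prime d" "d \<noteq> 2" "[2 ^ (p * q) = 1] (mod d)"
  shows "\<not> int d dvd 1 + gauss_sum q (2 ^ p)"
proof
  assume "int d dvd 1 + gauss_sum q (2 ^ p)"
  moreover have "[2 ^ (q * p) = 1] (mod d)" using assms(3) by (simp add: mult.commute)
  ultimately have "q dvd ord d 2" "[qchar q (q - 1) * int q = 1] (mod int d)"
    using prime_dvd_1_plus_gauss_sum[OF prime_q q_gt_2 assms(1)] by blast+
  moreover have "qchar q (q - 1) = -1"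
    using qchar_minus_one[OF prime_q q_gt_2] q_mod_4 by (simp add: minus_one_power_iff, presburger)
  ultimately have "q \<le> d - 1" "int d dvd - int q - 1"
    using dvd_ord_two_le[OF assms(1,2)] by (auto simp: cong_iff_dvd_diff)
  moreover have "- int q - 1 = - int (q + 1)" by simp
  ultimately have "q \<le> d - 1" "d dvd q + 1" by (simp_all only: dvd_minus_iff int_dvd_int_iff)
  moreover from this(2) have "d \<le> q + 1" by (rule dvd_imp_le) simp
  ultimately have "d = q + 1" using q_gt_2 by linarith
  hence "d > 2" "even d" using q_gt_2 prime_odd_nat[OF prime_q q_gt_2] by auto
  thus False using prime_odd_nat[OF assms(1)] by simp
qed

lemma coprime_period_sum: "coprime (2 ^ (p * q) - 1) (\<Sum>i<p * q. wh_seq p q g i * 2 ^ i)"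
proof (rule ccontr)
  define S where "S = (\<Sum>i<p * q. wh_seq p q g i * 2 ^ i)"
  assume "\<not> coprime (2 ^ (p * q) - 1) (\<Sum>i<p * q. wh_seq p q g i * 2 ^ i)"
  hence "gcd (2 ^ (p * q) - 1) S \<noteq> 1" unfolding S_def coprime_iff_gcd_eq_1 .
  then obtain d where "prime d" "d dvd gcd (2 ^ (p * q) - 1) S"
    by (blast dest: prime_factor_nat)
  hence d: "prime d" "d dvd 2 ^ (p * q) - 1" "d dvd S" by (simp_all only: gcd_greatest_iff)
  have "odd ((2::nat) ^ (p * q) - 1)" using p_gt_2 q_gt_2 by simp
  hence "d \<noteq> 2" using d(2) by auto
  have one: "[2 ^ (p * q) = 1] (mod d)" using d(2) by (simp add: cong_altdef_nat)
  have "int (2 ^ (p * q) - 1) = 2 ^ (p * q) - 1" by (simp add: of_nat_diff)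
  hence "int d dvd 2 ^ (p * q) - 1" using d(2) int_dvd_int_iff by metis
  hence "[2 * int S = - ((1 + gauss_sum p (2 ^ q)) * (1 + gauss_sum q (2 ^ p)))] (mod int d)"
    using cong_dvd_modulus[OF period_sum_cong] unfolding S_def by simp
  moreover have "int d dvd 2 * int S" using d(3) by simp
  ultimately have "int d dvd (1 + gauss_sum p (2 ^ q)) * (1 + gauss_sum q (2 ^ p))"
    by (simp add: cong_dvd_iff)
  thus False
    using not_dvd_1_plus_gauss_sum_p[OF d(1) \<open>d \<noteq> 2\<close> one]
      not_dvd_1_plus_gauss_sum_q[OF d(1) \<open>d \<noteq> 2\<close> one] d(1)
    by (simp add: prime_dvd_mult_iff)
qed

end

theorem theorem2:
  fixes p q g :: nat
  assumes "prime p" and "prime q"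
    and "p mod 4 = 1" and "q mod 4 = 3"
    and "q = p + 2"
    and "residue_primroot p g" and "residue_primroot q g"
  shows "two_adic_complexity (wh_seq p q g) (p * q) = int (p * q)"
proof -
  interpret twin_prime_whiteman p q g using assms by unfold_locales
  show ?thesis by (rule two_adic_complexity_coprime[OF coprime_period_sum])
qed

end
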